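(* Let $(\lambda_n)_n$, $(\nu_n)_n$ and, for each $j\in\mathbb{N}$, $(\rho_{j,n})_n$ be sequences of positive numbers, and assume $\lambda_n/\nu_n\to0$ as $n\to\infty$. Then, after extraction of a subsequence in $n$, there exists a sequence $(\mu_n)_n$ of positive numbers such that $\lambda_n/\mu_n\to0$ and $\mu_n/\nu_n\to0$, and for every $k\in\mathbb{N}$, either $\mu_n/\rho_{k,n}\to0$ or $\rho_{k,n}/\mu_n\to0$. *)

theory Defs
  imports Complex_Main
begin

end

theory Submission
  imports Defs "HOL-Analysis.Analysis" "HOL-Library.Diagonal_Subsequence"
begin

text \<open>Work on the logarithmic scale between \<open>\<lambda>\<^sub>n\<close> and \<open>\<nu>\<^sub>n\<close>: with
  \<open>D\<^sub>n = ln \<nu>\<^sub>n - ln \<lambda>\<^sub>n \<rightarrow> \<infinity>\<close>, each \<open>\<rho>\<^sub>k\<^sub>,\<^sub>n\<close> has the relative position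
  \<open>(ln \<rho>\<^sub>k\<^sub>,\<^sub>n - ln \<lambda>\<^sub>n) / D\<^sub>n\<close>. Clamped to \<open>[0,1]\<close>, these positions form countably many bounded
  sequences, so a diagonal subsequence makes all of them converge, to limits \<open>q\<^sub>k\<close>. Pick
  \<open>s \<in> (0,1)\<close> different from every \<open>q\<^sub>k\<close> and put \<open>\<mu>\<^sub>n = \<lambda>\<^sub>n exp (s D\<^sub>n)\<close>, the point at relative
  position \<open>s\<close>. Then \<open>\<mu>\<^sub>n\<close> is separated from \<open>\<lambda>\<^sub>n\<close>, \<open>\<nu>\<^sub>n\<close> and every \<open>\<rho>\<^sub>k\<^sub>,\<^sub>n\<close> by a gap in
  logarithm that grows linearly in \<open>D\<^sub>n\<close>.\<close>

lemma ln_ratio_tendsto_at_top: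
  fixes x y :: "'a \<Rightarrow> real"
  assumes pos: "\<And>n. x n > 0" "\<And>n. y n > 0" and lim: "((\<lambda>n. x n / y n) \<longlongrightarrow> 0) F"
  shows "filterlim (\<lambda>n. ln (y n) - ln (x n)) at_top F"
proof -
  have "filterlim (\<lambda>n. x n / y n) (at_right 0) F"
    using lim pos by (auto intro!: tendsto_imp_filterlim_at_right always_eventually)
  then have "filterlim (\<lambda>n. inverse (x n / y n)) at_top F"
    using filterlim_compose filterlim_inverse_at_top_right by blast
  then have "filterlim (\<lambda>n. ln (inverse (x n / y n))) at_top F"
    using filterlim_compose ln_at_top by blast
  moreover have "ln (inverse (x n / y n)) = ln (y n) - ln (x n)" for n
    using pos[of n] by (simp add: ln_div ln_inverse)
  ultimately show ?thesis by simp
qed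

lemma ratio_tendsto_zero_if_ln_gap:
  fixes x y D :: "'a \<Rightarrow> real"
  assumes D: "filterlim D at_top F" and "c > 0"
    and gap: "eventually (\<lambda>n. x n > 0 \<and> y n > 0 \<and> c * D n \<le> ln (y n) - ln (x n)) F"
  shows "((\<lambda>n. x n / y n) \<longlongrightarrow> 0) F"
proof (rule Lim_null_comparison)
  have "filterlim (\<lambda>n. c * D n) at_top F"
    by (rule filterlim_tendsto_pos_mult_at_top[OF tendsto_const \<open>c > 0\<close> D])
  then have "filterlim (\<lambda>n. - (c * D n)) at_bot F"
    by (simp add: filterlim_uminus_at_top)
  then show "((\<lambda>n. exp (- (c * D n))) \<longlongrightarrow> 0) F"
    using filterlim_compose[OF exp_at_bot] by blast
  show "eventually (\<lambda>n. norm (x n / y n) \<le> exp (- (c * D n))) F"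
    using gap
  proof eventually_elim
    case (elim n)
    then have "x n / y n = exp (- (ln (y n) - ln (x n)))"
      by (simp add: exp_diff)
    with elim show ?case by simp
  qed
qed

lemma diagonal_convergent_subsequence:
  fixes x :: "nat \<Rightarrow> nat \<Rightarrow> 'a::heine_borel"
  assumes bounded: "\<And>k. bounded (range (x k))"
  obtains \<phi> where "strict_mono \<phi>" "\<And>k. convergent (\<lambda>n. x k (\<phi> n))"
proof -
  interpret subseqs "\<lambda>k r. convergent (\<lambda>n. x k (r n))"
  proof
    fix k and s :: "nat \<Rightarrow> nat"
    have "bounded (range (\<lambda>n. x k (s n)))"
      using bounded[of k] by (rule bounded_subset) auto
    then obtain l r where "strict_mono r" "((\<lambda>n. x k (s n)) \<circ> r) \<longlonglongrightarrow> l"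
      using bounded_imp_convergent_subsequence by blast
    then show "\<exists>r'. strict_mono r' \<and> convergent (\<lambda>n. x k ((s \<circ> r') n))"
      by (auto simp: convergent_def o_def)
  qed
  have "convergent (\<lambda>n. x k (diagseq n))" for k
  proof -
    have "convergent (\<lambda>n. x k ((diagseq \<circ> (+) (Suc k)) n))"
      by (rule diagseq_holds) (auto simp: convergent_def o_def intro: LIMSEQ_subseq_LIMSEQ[unfolded o_def])
    then obtain L where "(\<lambda>n. x k (diagseq (n + Suc k))) \<longlonglongrightarrow> L"
      by (auto simp: o_def convergent_def add.commute)
    then show ?thesis
      using LIMSEQ_offset convergent_def by blast
  qed
  then show ?thesis
    using that subseq_diagseq by blast
qed

lemma clamped_limit_separates:
  fixes p :: "'a \<Rightarrow> real"
  assumes lim: "((\<lambda>n. max 0 (min 1 (p n))) \<longlongrightarrow> q) F" and "0 < s" "s < 1" "q \<noteq> s"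
  obtains c where "s < c" "eventually (\<lambda>n. c < p n) F"
    | c where "c < s" "eventually (\<lambda>n. p n < c) F"
proof (cases "s < q")
  case True
  define c where "c = (q + s) / 2"
  have "eventually (\<lambda>n. c < max 0 (min 1 (p n))) F"
    using order_tendstoD(1)[OF lim, of c] True by (simp add: c_def)
  then have "eventually (\<lambda>n. c < p n) F"
    by eventually_elim (use \<open>0 < s\<close> True in \<open>auto simp: c_def\<close>)
  then show ?thesis
    using that(1)[of c] True by (simp add: c_def)
next
  case False
  with \<open>q \<noteq> s\<close> have "q < s" by simp
  define c where "c = (q + s) / 2"
  have "eventually (\<lambda>n. max 0 (min 1 (p n)) < c) F"
    using order_tendstoD(2)[OF lim, of c] \<open>q < s\<close> by (simp add: c_def)
  then have "eventually (\<lambda>n. p n < c) F"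
    by eventually_elim (use \<open>s < 1\<close> \<open>q < s\<close> in \<open>auto simp: c_def\<close>)
  then show ?thesis
    using that(2)[of c] \<open>q < s\<close> by (simp add: c_def)
qed

lemma ratio_dichotomy_from_ln_position:
  fixes r m b D :: "'a \<Rightarrow> real"
  assumes D: "filterlim D at_top F"
    and pos: "\<And>n. r n > 0" "\<And>n. m n > 0"
    and m: "\<And>n. ln (m n) = ln (b n) + s * D n"
    and lim: "((\<lambda>n. max 0 (min 1 ((ln (r n) - ln (b n)) / D n))) \<longlongrightarrow> q) F"
    and "0 < s" "s < 1" "q \<noteq> s"
  shows "((\<lambda>n. m n / r n) \<longlongrightarrow> 0) F \<or> ((\<lambda>n. r n / m n) \<longlongrightarrow> 0) F"
proof -
  have D_pos: "eventually (\<lambda>n. D n > 0) F"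
    using D by (simp add: filterlim_at_top_dense)
  have gap: "ln (r n) - ln (m n) = ((ln (r n) - ln (b n)) / D n - s) * D n" if "D n > 0" for n
    using that m[of n] by (simp add: field_simps)
  from clamped_limit_separates[OF lim \<open>0 < s\<close> \<open>s < 1\<close> \<open>q \<noteq> s\<close>] show ?thesis
  proof cases
    case (1 c)
    have "((\<lambda>n. m n / r n) \<longlongrightarrow> 0) F"
    proof (rule ratio_tendsto_zero_if_ln_gap[OF D])
      show "0 < c - s" using 1 by simp
      show "eventually (\<lambda>n. m n > 0 \<and> r n > 0 \<and> (c - s) * D n \<le> ln (r n) - ln (m n)) F"
        using 1(2) D_pos by eventually_elim (simp add: pos gap mult_right_mono)
    qed
    then show ?thesis ..
  next
    case (2 c)
    have "((\<lambda>n. r n / m n) \<longlongrightarrow> 0) F"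
    proof (rule ratio_tendsto_zero_if_ln_gap[OF D])
      show "0 < s - c" using 2 by simp
      show "eventually (\<lambda>n. r n > 0 \<and> m n > 0 \<and> (s - c) * D n \<le> ln (m n) - ln (r n)) F"
        using 2(2) D_pos
      proof eventually_elim
        case (elim n)
        then have "(s - c) * D n \<le> (s - (ln (r n) - ln (b n)) / D n) * D n"
          by (intro mult_right_mono) auto
        then show ?case
          using gap[of n] elim by (simp add: pos algebra_simps)
      qed
    qed
    then show ?thesis ..
  qed
qed

theorem claimB1:
  fixes lam nu :: "nat \<Rightarrow> real" and rho :: "nat \<Rightarrow> nat \<Rightarrow> real"
  assumes lam_pos: "\<And>n. lam n > 0"
    and nu_pos: "\<And>n. nu n > 0"
    and rho_pos: "\<And>j n. rho j n > 0"
    and lim: "(\<lambda>n. lam n / nu n) \<longlonglongrightarrow> 0"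
  shows "\<exists>\<phi> :: nat \<Rightarrow> nat. strict_mono \<phi> \<and>
           (\<exists>mu :: nat \<Rightarrow> real. (\<forall>n. mu n > 0) \<and>
              (\<lambda>n. lam (\<phi> n) / mu n) \<longlonglongrightarrow> 0 \<and>
              (\<lambda>n. mu n / nu (\<phi> n)) \<longlonglongrightarrow> 0 \<and>
              (\<forall>k. (\<lambda>n. mu n / rho k (\<phi> n)) \<longlonglongrightarrow> 0 \<or>
                   (\<lambda>n. rho k (\<phi> n) / mu n) \<longlonglongrightarrow> 0))"
proof -
  define D where "D n = ln (nu n) - ln (lam n)" for n
  define pos where "pos k n = max 0 (min 1 ((ln (rho k n) - ln (lam n)) / D n))" for k n
  have "bounded (range (pos k))" for k
    by (rule boundedI[of _ 1]) (auto simp: pos_def)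
  then obtain \<phi> where \<phi>: "strict_mono \<phi>" and "\<And>k. convergent (\<lambda>n. pos k (\<phi> n))"
    using diagonal_convergent_subsequence by blast
  then obtain q where q: "\<And>k. (\<lambda>n. pos k (\<phi> n)) \<longlonglongrightarrow> q k"
    unfolding convergent_def by metis
  have "uncountable ({0<..<1::real} - range q)"
    by (intro uncountable_minus_countable) (auto simp: uncountable_open_interval)
  then obtain s where s: "0 < s" "s < 1" "s \<notin> range q"
    by (metis Diff_iff countable_empty equals0I greaterThanLessThan_iff)
  define mu where "mu n = exp (ln (lam (\<phi> n)) + s * D (\<phi> n))" for n
  have ln_mu: "ln (mu n) = ln (lam (\<phi> n)) + s * D (\<phi> n)" for n
    by (simp add: mu_def)
  have "filterlim D at_top sequentially"
    unfolding D_def using lam_pos nu_pos lim by (rule ln_ratio_tendsto_at_top)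
  then have D\<phi>: "filterlim (\<lambda>n. D (\<phi> n)) at_top sequentially"
    using filterlim_compose filterlim_subseq[OF \<phi>] by blast
  have "(\<lambda>n. lam (\<phi> n) / mu n) \<longlonglongrightarrow> 0"
    by (rule ratio_tendsto_zero_if_ln_gap[OF D\<phi> \<open>0 < s\<close>]) (simp add: lam_pos mu_def ln_mu)
  moreover have "(\<lambda>n. mu n / nu (\<phi> n)) \<longlonglongrightarrow> 0"
    by (rule ratio_tendsto_zero_if_ln_gap[OF D\<phi>, of "1 - s"])
      (use s in \<open>simp_all add: nu_pos mu_def ln_mu D_def algebra_simps\<close>)
  moreover have "(\<lambda>n. mu n / rho k (\<phi> n)) \<longlonglongrightarrow> 0 \<or> (\<lambda>n. rho k (\<phi> n) / mu n) \<longlonglongrightarrow> 0" for k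
    using q[of k] s rho_pos
    by (intro ratio_dichotomy_from_ln_position[OF D\<phi> _ _ ln_mu]) (auto simp: mu_def pos_def)
  moreover have "\<forall>n. mu n > 0"
    by (simp add: mu_def)
  ultimately show ?thesis
    using \<phi> by blast
qed

end
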